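(* Let $S=\mathbb{C}[x_1,x_2,x_3]$ and let $m$ be a positive integer. Then $h_1,h_4,h_m$ form a regular sequence in $S$ if and only if $m=3k$ for some integer $k\ge 1$.
   Context: $h_d=\sum_{1\le i_1\le\cdots\le i_d\le 3}x_{i_1}\cdots x_{i_d}$ denotes the complete symmetric polynomial of degree $d$ in three variables. A sequence $y_1,\dots,y_d$ in $S$ is a regular sequence if $\langle y_1,\dots,y_d\rangle\ne S$ and for each $i$ the image of $y_{i+1}$ is a nonzero divisor in $S/\langle y_1,\dots,y_i\rangle$. *)

theory Defs
  imports Complex_Main "HOL-Computational_Algebra.Polynomial"
begin

text \<open>The polynomial ring S = C[x1,x2,x3] is represented as the iterated univariate
polynomial ring C[x1][x2][x3], i.e. the type complex poly poly poly.\<close>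

type_synonym S3 = "complex poly poly poly"

definition X1 :: S3 where "X1 = [:[:[:0, 1:]:]:]"
definition X2 :: S3 where "X2 = [:[:0, 1:]:]"
definition X3 :: S3 where "X3 = [:0, 1:]"

definition h :: "nat \<Rightarrow> S3" where
  "h d = (\<Sum>(a, b) \<in> {(a, b). a + b \<le> d}. X1 ^ a * X2 ^ b * X3 ^ (d - a - b))"

definition gen_ideal :: "'a::comm_ring_1 list \<Rightarrow> 'a set" where
  "gen_ideal ys = {\<Sum>i<length ys. r i * ys ! i | r. True}"

definition regular_sequence :: "'a::comm_ring_1 list \<Rightarrow> bool" where
  "regular_sequence ys \<longleftrightarrow>
     gen_ideal ys \<noteq> UNIV \<and>
     (\<forall>i < length ys. \<forall>z. ys ! i * z \<in> gen_ideal (take i ys) \<longrightarrow> z \<in> gen_ideal (take i ys))"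

end

theory Submission
  imports Defs
begin

text \<open>Setting x3 = -(x1 + x2) identifies S/(h1) with \<complex>[x1,x2]. There e1 vanishes, so the
  recurrence of the complete symmetric polynomials only involves \<sigma>2 and \<sigma>3:
  h2 = -\<sigma>2, h4 = \<sigma>2^2, and h_m = \<sigma>3^k modulo \<sigma>2 if m = 3k, while h_m = 0 modulo \<sigma>2
  otherwise. Now \<sigma>2 = -(x2 - \<omega> x1)(x2 - \<omega>^2 x1) splits into linear factors in x2 on whose
  zeros \<sigma>3 does not vanish, so for m = 3k the image of h_m is a nonzerodivisor modulo \<sigma>2^2.
  If 3 does not divide m, then h_m h2 \<in> (\<sigma>2^2) although h2 = -\<sigma>2 \<notin> (\<sigma>2^2).\<close>

fun complete_hom2 :: "'a::comm_ring_1 \<Rightarrow> 'a \<Rightarrow> nat \<Rightarrow> 'a" where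
  "complete_hom2 x y 0 = 1"
| "complete_hom2 x y (Suc n) = y * complete_hom2 x y n + x ^ Suc n"

fun complete_hom3 :: "'a::comm_ring_1 \<Rightarrow> 'a \<Rightarrow> 'a \<Rightarrow> nat \<Rightarrow> 'a" where
  "complete_hom3 x y z 0 = 1"
| "complete_hom3 x y z (Suc n) = z * complete_hom3 x y z n + complete_hom2 x y (Suc n)"

lemma complete_hom2_eq_sum: "complete_hom2 x y n = (\<Sum>a\<le>n. x ^ a * y ^ (n - a))"
proof (induction n)
  case (Suc n)
  have "(\<Sum>a\<le>n. x ^ a * y ^ (Suc n - a)) = y * (\<Sum>a\<le>n. x ^ a * y ^ (n - a))"
    by (simp add: sum_distrib_left Suc_diff_le algebra_simps)
  then show ?case using Suc by simp
qed simp

lemma complete_hom2_eq_sum_pairs: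
  "complete_hom2 x y n = (\<Sum>(a, b) \<in> {(a, b). a + b = n}. x ^ a * y ^ b)"
proof -
  have "{(a, b). a + b = n} = (\<lambda>a. (a, n - a)) ` {..n}" by auto
  moreover have "inj_on (\<lambda>a. (a, n - a)) {..n}" by (auto simp: inj_on_def)
  ultimately show ?thesis by (simp add: sum.reindex complete_hom2_eq_sum)
qed

lemma finite_pairs_sum_le: "finite {(a::nat, b::nat). a + b \<le> d}"
  by (rule finite_subset[of _ "{..d} \<times> {..d}"]) auto

lemma complete_hom3_eq_sum:
  "complete_hom3 x y z d = (\<Sum>(a, b) \<in> {(a, b). a + b \<le> d}. x ^ a * y ^ b * z ^ (d - a - b))"
proof (induction d)
  case 0
  have "{(a::nat, b::nat). a + b \<le> 0} = {(0, 0)}" by auto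
  then show ?case by simp
next
  case (Suc d)
  have split: "{(a, b). a + b \<le> Suc d} = {(a, b). a + b \<le> d} \<union> {(a, b). a + b = Suc d}"
    by auto
  have finite_top: "finite {(a::nat, b::nat). a + b = Suc d}"
    by (rule finite_subset[OF _ finite_pairs_sum_le[of "Suc d"]]) auto
  have "(\<Sum>(a, b) \<in> {(a, b). a + b \<le> Suc d}. x ^ a * y ^ b * z ^ (Suc d - a - b))
     = (\<Sum>(a, b) \<in> {(a, b). a + b \<le> d}. x ^ a * y ^ b * z ^ (Suc d - a - b))
     + (\<Sum>(a, b) \<in> {(a, b). a + b = Suc d}. x ^ a * y ^ b * z ^ (Suc d - a - b))"
    unfolding split by (rule sum.union_disjoint[OF finite_pairs_sum_le finite_top]) auto
  also have "(\<Sum>(a, b) \<in> {(a, b). a + b \<le> d}. x ^ a * y ^ b * z ^ (Suc d - a - b))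
     = z * (\<Sum>(a, b) \<in> {(a, b). a + b \<le> d}. x ^ a * y ^ b * z ^ (d - a - b))"
    unfolding sum_distrib_left by (rule sum.cong) (auto simp: Suc_diff_le algebra_simps)
  also have "(\<Sum>(a, b) \<in> {(a, b). a + b = Suc d}. x ^ a * y ^ b * z ^ (Suc d - a - b))
     = (\<Sum>(a, b) \<in> {(a, b). a + b = Suc d}. x ^ a * y ^ b)"
    by (rule sum.cong) auto
  finally show ?case using Suc by (simp add: complete_hom2_eq_sum_pairs)
qed

lemma h_eq_complete_hom3: "h d = complete_hom3 X1 X2 X3 d"
  unfolding h_def complete_hom3_eq_sum ..

lemma poly_complete_hom2: "poly (complete_hom2 x y n) a = complete_hom2 (poly x a) (poly y a) n"
  by (induction n) auto

lemma poly_complete_hom3: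
  "poly (complete_hom3 x y z n) a = complete_hom3 (poly x a) (poly y a) (poly z a) n"
  by (induction n) (auto simp: poly_complete_hom2)

lemma complete_hom3_rec:
  fixes x y z :: "'a::comm_ring_1"
  assumes "x + y + z = 0"
  shows "complete_hom3 x y z (n + 3)
    = - (x*y + y*z + z*x) * complete_hom3 x y z (n + 1) + x*y*z * complete_hom3 x y z n"
proof -
  have "complete_hom3 x y z (n + 3) = (x + y + z) * complete_hom3 x y z (n + 2)
      - (x*y + y*z + z*x) * complete_hom3 x y z (n + 1) + x*y*z * complete_hom3 x y z n"
    by (simp add: numeral_3_eq_3 numeral_2_eq_2 algebra_simps)
  then show ?thesis
    unfolding assms by (simp del: complete_hom3.simps complete_hom2.simps add: algebra_simps)
qed

lemma complete_hom3_1: "x + y + z = 0 \<Longrightarrow> complete_hom3 x y z 1 = 0"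
  by (simp add: algebra_simps)

lemma complete_hom3_2:
  fixes x y z :: "'a::comm_ring_1"
  assumes "x + y + z = 0"
  shows "complete_hom3 x y z 2 = - (x*y + y*z + z*x)"
proof -
  have z: "z = - x - y" using assms by (simp add: algebra_simps eq_neg_iff_add_eq_0)
  show ?thesis by (simp add: z numeral_2_eq_2 algebra_simps power2_eq_square)
qed

lemma complete_hom3_4:
  fixes x y z :: "'a::comm_ring_1"
  assumes "x + y + z = 0"
  shows "complete_hom3 x y z 4 = (x*y + y*z + z*x) ^ 2"
proof -
  have "(1::nat) + 3 = 4" "(1::nat) + 1 = 2" by simp_all
  then have "complete_hom3 x y z 4
      = - (x*y + y*z + z*x) * complete_hom3 x y z 2 + x*y*z * complete_hom3 x y z 1"
    using complete_hom3_rec[OF assms, of 1] by metis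
  then show ?thesis
    unfolding complete_hom3_1[OF assms] complete_hom3_2[OF assms]
    by (simp only: mult_zero_right add_0_right minus_mult_minus power2_eq_square)
qed

lemma complete_hom3_mod_sigma2:
  fixes x y z :: "'a::comm_ring_1"
  assumes "x + y + z = 0"
  shows "\<exists>q. complete_hom3 x y z n
    = (if 3 dvd n then (x*y*z) ^ (n div 3) else 0) + (x*y + y*z + z*x) * q"
proof (induction n rule: less_induct)
  case (less n)
  show ?case
  proof (cases "n < 3")
    case True
    then consider "n = 0" | "n = 1" | "n = 2" by linarith
    then show ?thesis
    proof cases
      case 3
      then show ?thesis using complete_hom3_2[OF assms] by (intro exI[of _ "-1"]) simp
    qed (use complete_hom3_1[OF assms] in \<open>auto intro: exI[of _ 0]\<close>)
  next
    case False
    then obtain k where n: "n = k + 3" by (metis add.commute le_Suc_ex not_less)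
    obtain q where q: "complete_hom3 x y z k
        = (if 3 dvd k then (x*y*z) ^ (k div 3) else 0) + (x*y + y*z + z*x) * q"
      using less.IH[of k] n by auto
    have "3 dvd n \<longleftrightarrow> 3 dvd k" "3 dvd k \<Longrightarrow> n div 3 = Suc (k div 3)" using n by auto
    then have "complete_hom3 x y z n = (if 3 dvd n then (x*y*z) ^ (n div 3) else 0)
        + (x*y + y*z + z*x) * (x*y*z*q - complete_hom3 x y z (k + 1))"
      unfolding n complete_hom3_rec[OF assms] q by (auto simp: algebra_simps)
    then show ?thesis by blast
  qed
qed

lemma gen_ideal_Nil: "gen_ideal [] = {0}"
  by (simp add: gen_ideal_def)

lemma gen_ideal_Cons: "gen_ideal (a # ys) = {u * a + v | u v. v \<in> gen_ideal ys}"
proof (intro equalityI subsetI)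
  fix f assume "f \<in> gen_ideal (a # ys)"
  then obtain r where "f = (\<Sum>i<Suc (length ys). r i * (a # ys) ! i)"
    by (auto simp: gen_ideal_def)
  then have "f = r 0 * a + (\<Sum>i<length ys. r (Suc i) * ys ! i)"
    by (simp add: sum.lessThan_Suc_shift del: sum.lessThan_Suc)
  then show "f \<in> {u * a + v | u v. v \<in> gen_ideal ys}"
    unfolding gen_ideal_def by (blast intro: exI[of _ "\<lambda>i. r (Suc i)"])
next
  fix f assume "f \<in> {u * a + v | u v. v \<in> gen_ideal ys}"
  then obtain u r where "f = u * a + (\<Sum>i<length ys. r i * ys ! i)"
    by (auto simp: gen_ideal_def)
  then have "f = (\<Sum>i<Suc (length ys). case_nat u r i * (a # ys) ! i)"
    by (simp add: sum.lessThan_Suc_shift del: sum.lessThan_Suc)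
  then show "f \<in> gen_ideal (a # ys)"
    unfolding gen_ideal_def by auto
qed

lemma mem_gen_ideal_1: "f \<in> gen_ideal [a] \<longleftrightarrow> (\<exists>u. f = u * a)"
  by (simp add: gen_ideal_Cons gen_ideal_Nil)

lemma mem_gen_ideal_2: "f \<in> gen_ideal [a, b] \<longleftrightarrow> (\<exists>u v. f = u * a + v * b)"
  by (auto simp: gen_ideal_Cons gen_ideal_Nil)

lemma mem_gen_ideal_3: "f \<in> gen_ideal [a, b, c] \<longleftrightarrow> (\<exists>u v w. f = u * a + v * b + w * c)"
  by (auto simp: gen_ideal_Cons gen_ideal_Nil add.assoc) blast

lemma regular_sequence_3:
  "regular_sequence [a, b, c] \<longleftrightarrow> gen_ideal [a, b, c] \<noteq> UNIV \<and>
     (\<forall>z. a * z = 0 \<longrightarrow> z = 0) \<and>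
     (\<forall>z. b * z \<in> gen_ideal [a] \<longrightarrow> z \<in> gen_ideal [a]) \<and>
     (\<forall>z. c * z \<in> gen_ideal [a, b] \<longrightarrow> z \<in> gen_ideal [a, b])"
  by (simp add: regular_sequence_def All_less_Suc2 gen_ideal_Nil numeral_3_eq_3)

lemma mem_gen_ideal_linear_iff:
  fixes c :: "'a::comm_ring_1"
  shows "f \<in> gen_ideal [[:-c, 1:]] \<longleftrightarrow> poly f c = 0"
  unfolding mem_gen_ideal_1 poly_eq_0_iff_dvd by (metis dvd_def mult.commute)

lemma mem_gen_ideal_linear2_iff:
  fixes c :: "'a::comm_ring_1"
  shows "f \<in> gen_ideal [[:-c, 1:], g] \<longleftrightarrow> poly g c dvd poly f c"
proof
  assume "f \<in> gen_ideal [[:-c, 1:], g]"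
  then obtain u v where "f = u * [:-c, 1:] + v * g"
    by (auto simp: mem_gen_ideal_2)
  then have "poly f c = poly g c * poly v c" by simp
  then show "poly g c dvd poly f c" by simp
next
  assume "poly g c dvd poly f c"
  then obtain w where "poly f c = poly g c * w" by blast
  then have "poly (f - [:w:] * g) c = 0" by simp
  then have "[:-c, 1:] dvd f - [:w:] * g" by (simp only: poly_eq_0_iff_dvd)
  then obtain q where "f - [:w:] * g = [:-c, 1:] * q" by blast
  then have "f = q * [:-c, 1:] + [:w:] * g" by (simp add: algebra_simps eq_diff_eq)
  then show "f \<in> gen_ideal [[:-c, 1:], g]"
    unfolding mem_gen_ideal_2 by blast
qed

lemma linear_power_dvd_mult_cancel:
  fixes p q :: "'a::idom poly"
  assumes "poly p a \<noteq> 0" and "[:-a, 1:] ^ n dvd p * q"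
  shows "[:-a, 1:] ^ n dvd q"
proof (cases "q = 0")
  case False
  with assms(1) have pq: "p * q \<noteq> 0" by auto
  with assms(2) have "n \<le> order a (p * q)" by (simp add: order_divides)
  also have "\<dots> = order a q" using pq assms(1) by (simp add: order_mult order_0I)
  finally show ?thesis by (simp add: order_divides)
qed simp

lemma linear_pair_power_dvd_mult_cancel:
  fixes p q :: "'a::idom poly"
  assumes "poly p a \<noteq> 0" "poly p b \<noteq> 0"
    and dvd: "([:-a, 1:] * [:-b, 1:]) ^ n dvd p * q"
  shows "([:-a, 1:] * [:-b, 1:]) ^ n dvd q"
proof -
  have "[:-a, 1:] ^ n dvd ([:-a, 1:] * [:-b, 1:]) ^ n" by (simp only: power_mult_distrib dvd_triv_left)
  then have "[:-a, 1:] ^ n dvd p * q" using dvd by (rule dvd_trans)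
  then obtain r where q: "q = [:-a, 1:] ^ n * r"
    using linear_power_dvd_mult_cancel[OF assms(1)] by (blast elim: dvdE)
  have "[:-a, 1:] ^ n * [:-b, 1:] ^ n dvd [:-a, 1:] ^ n * (p * r)"
    using dvd unfolding q power_mult_distrib by (simp only: ac_simps)
  then have "[:-b, 1:] ^ n dvd p * r" by simp
  then have "[:-b, 1:] ^ n dvd r" by (rule linear_power_dvd_mult_cancel[OF assms(2)])
  then show ?thesis unfolding q power_mult_distrib by (rule mult_dvd_mono[OF dvd_refl])
qed

lemma primitive_cube_roots_of_unity: "\<exists>w v :: complex. w * v = 1 \<and> w + v = -1"
  by (rule exI[of _ "Complex (-1/2) (sqrt 3 / 2)"], rule exI[of _ "Complex (-1/2) (- sqrt 3 / 2)"])
     (simp add: complex_eq_iff)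

text \<open>The images of x1, x2, x3 in \<complex>[x1][x2] \<cong> S/(h1), obtained by evaluating the outermost
  variable x3 at -(x1 + x2).\<close>

definition y1 :: "complex poly poly" where "y1 = [:[:0, 1:]:]"
definition y2 :: "complex poly poly" where "y2 = [:0, 1:]"
definition y3 :: "complex poly poly" where "y3 = - (y1 + y2)"
definition sigma2 :: "complex poly poly" where "sigma2 = y1 * y2 + y2 * y3 + y3 * y1"

lemma y_sum_zero: "y1 + y2 + y3 = 0"
  by (simp add: y3_def)

lemma h1_eq: "h 1 = [:-y3, 1:]"
  by (simp add: h_eq_complete_hom3 X1_def X2_def X3_def y1_def y2_def y3_def)

lemma poly_h_y3: "poly (h d) y3 = complete_hom3 y1 y2 y3 d"
  by (simp add: h_eq_complete_hom3 poly_complete_hom3 X1_def X2_def X3_def y1_def y2_def)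

lemma poly_h2_y3: "poly (h 2) y3 = - sigma2"
  unfolding poly_h_y3 sigma2_def by (rule complete_hom3_2[OF y_sum_zero])

lemma poly_h4_y3: "poly (h 4) y3 = sigma2 ^ 2"
  unfolding poly_h_y3 sigma2_def by (rule complete_hom3_4[OF y_sum_zero])

lemma sigma2_factor:
  assumes "w * v = 1" "w + v = -1"
  shows "sigma2 = - ([:-[:0, w:], 1:] * [:-[:0, v:], 1:])"
proof -
  have "[:-[:0, w:], 1:] * [:-[:0, v:], 1:] = [:[:0, 0, w * v:], [:0, -(w + v):], 1:]"
    by (simp add: algebra_simps)
  also have "\<dots> = y1 ^ 2 + y1 * y2 + y2 ^ 2"
    using assms by (simp add: y1_def y2_def algebra_simps power2_eq_square)
  finally show ?thesis by (simp add: sigma2_def y3_def algebra_simps power2_eq_square)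
qed

lemma poly_sigma2_root:
  assumes "w * v = 1" "w + v = -1"
  shows "poly sigma2 [:0, w:] = 0"
  unfolding sigma2_factor[OF assms] by simp

lemma sigma2_not_unit: "\<not> is_unit sigma2"
proof
  assume "is_unit sigma2"
  then obtain k where k: "1 = sigma2 * k" by (rule dvdE)
  obtain w v :: complex where wv: "w * v = 1" "w + v = -1"
    using primitive_cube_roots_of_unity by blast
  have "poly 1 [:0, w:] = poly sigma2 [:0, w:] * poly k [:0, w:]"
    unfolding k poly_mult ..
  then show False using poly_sigma2_root[OF wv] by simp
qed

lemma sigma2_nonzero: "sigma2 \<noteq> 0"
proof -
  obtain w v :: complex where "w * v = 1" "w + v = -1"
    using primitive_cube_roots_of_unity by blast
  then have "sigma2 = - ([:-[:0, w:], 1:] * [:-[:0, v:], 1:])" by (rule sigma2_factor)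
  then show ?thesis
    by (metis neg_equal_0_iff_equal mult_eq_0_iff pCons_eq_0_iff one_neq_zero)
qed

lemma poly_hm_y3_nonzero_at_sigma2_root:
  assumes "3 dvd m" "w * v = 1" "w + v = -1"
  shows "poly (poly (h m) y3) [:0, w:] \<noteq> 0"
proof -
  obtain q where q: "poly (h m) y3 = (y1 * y2 * y3) ^ (m div 3) + sigma2 * q"
    using complete_hom3_mod_sigma2[OF y_sum_zero, of m] assms(1)
    by (auto simp: poly_h_y3 sigma2_def)
  have "w \<noteq> 0" "w \<noteq> -1" using assms(2,3) by auto
  then show ?thesis
    unfolding q using poly_sigma2_root[OF assms(2,3)] by (simp add: poly_power y1_def y2_def y3_def)
qed

lemma mem_gen_ideal_h1_h4_iff: "f \<in> gen_ideal [h 1, h 4] \<longleftrightarrow> sigma2 ^ 2 dvd poly f y3"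
  unfolding h1_eq mem_gen_ideal_linear2_iff poly_h4_y3 ..

lemma poly_h_origin: "d > 0 \<Longrightarrow> poly (poly (poly (h d) 0) 0) 0 = 0"
  by (cases d) (simp_all add: h_eq_complete_hom3 poly_complete_hom3 X1_def X2_def X3_def
      del: complete_hom3.simps, simp)

lemma gen_ideal_h1_h4_hm_proper: "m > 0 \<Longrightarrow> gen_ideal [h 1, h 4, h m] \<noteq> UNIV"
proof
  assume "m > 0" and "gen_ideal [h 1, h 4, h m] = UNIV"
  then obtain u v w where "1 = u * h 1 + v * h 4 + w * h m"
    by (metis UNIV_I mem_gen_ideal_3)
  then have "poly (poly (poly 1 0) 0) 0 = poly (poly (poly (u * h 1 + v * h 4 + w * h m) 0) 0) 0"
    by simp
  also have "\<dots> = 0"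
    using poly_h_origin[of 1] poly_h_origin[of 4] poly_h_origin[OF \<open>m > 0\<close>] by simp
  finally show False by simp
qed

lemma h1_nonzero_divisor: "h 1 * z = 0 \<Longrightarrow> z = 0"
  unfolding h1_eq by (simp only: mult_eq_0_iff pCons_eq_0_iff one_neq_zero simp_thms)

lemma h4_nonzero_divisor_mod_h1:
  assumes "h 4 * z \<in> gen_ideal [h 1]"
  shows "z \<in> gen_ideal [h 1]"
proof -
  have "sigma2 ^ 2 * poly z y3 = 0"
    using assms unfolding h1_eq mem_gen_ideal_linear_iff by (simp add: poly_h4_y3)
  then show ?thesis unfolding h1_eq mem_gen_ideal_linear_iff by (simp add: sigma2_nonzero)
qed

lemma hm_nonzero_divisor_mod_h1_h4:
  assumes "3 dvd m" "h m * z \<in> gen_ideal [h 1, h 4]"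
  shows "z \<in> gen_ideal [h 1, h 4]"
proof -
  obtain w v :: complex where wv: "w * v = 1" "w + v = -1"
    using primitive_cube_roots_of_unity by blast
  have sq: "sigma2 ^ 2 = ([:-[:0, w:], 1:] * [:-[:0, v:], 1:]) ^ 2"
    unfolding sigma2_factor[OF wv] by (rule power2_minus)
  have "([:-[:0, w:], 1:] * [:-[:0, v:], 1:]) ^ 2 dvd poly (h m) y3 * poly z y3"
    using assms(2) unfolding mem_gen_ideal_h1_h4_iff sq poly_mult .
  then have "([:-[:0, w:], 1:] * [:-[:0, v:], 1:]) ^ 2 dvd poly z y3"
  proof (rule linear_pair_power_dvd_mult_cancel[rotated 2])
    show "poly (poly (h m) y3) [:0, w:] \<noteq> 0"
      by (rule poly_hm_y3_nonzero_at_sigma2_root[OF assms(1) wv])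
    show "poly (poly (h m) y3) [:0, v:] \<noteq> 0"
      using poly_hm_y3_nonzero_at_sigma2_root[OF assms(1), of v w] wv by (simp add: ac_simps)
  qed
  then show ?thesis unfolding mem_gen_ideal_h1_h4_iff sq .
qed

lemma hm_zero_divisor_mod_h1_h4:
  assumes "\<not> 3 dvd m"
  shows "h m * h 2 \<in> gen_ideal [h 1, h 4]" and "h 2 \<notin> gen_ideal [h 1, h 4]"
proof -
  obtain q where "poly (h m) y3 = sigma2 * q"
    using complete_hom3_mod_sigma2[OF y_sum_zero, of m] assms
    by (auto simp: poly_h_y3 sigma2_def)
  then have "poly (h m * h 2) y3 = sigma2 ^ 2 * - q"
    by (simp add: poly_h2_y3 power2_eq_square)
  then show "h m * h 2 \<in> gen_ideal [h 1, h 4]"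
    unfolding mem_gen_ideal_h1_h4_iff by simp
  show "h 2 \<notin> gen_ideal [h 1, h 4]"
  proof
    assume "h 2 \<in> gen_ideal [h 1, h 4]"
    then have "sigma2 * sigma2 dvd sigma2 * 1"
      unfolding mem_gen_ideal_h1_h4_iff poly_h2_y3 by (simp add: power2_eq_square)
    then show False using sigma2_nonzero sigma2_not_unit by simp
  qed
qed

theorem proposition4p7:
  fixes m :: nat
  assumes "m > 0"
  shows "regular_sequence [h 1, h 4, h m] \<longleftrightarrow> (\<exists>k::nat. k \<ge> 1 \<and> m = 3 * k)"
proof -
  have "(\<exists>k::nat. k \<ge> 1 \<and> m = 3 * k) \<longleftrightarrow> 3 dvd m" using assms by auto
  moreover have "(\<forall>z. h m * z \<in> gen_ideal [h 1, h 4] \<longrightarrow> z \<in> gen_ideal [h 1, h 4])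
      \<longleftrightarrow> 3 dvd m"
    using hm_nonzero_divisor_mod_h1_h4 hm_zero_divisor_mod_h1_h4 by blast
  ultimately show ?thesis
    unfolding regular_sequence_3
    using gen_ideal_h1_h4_hm_proper[OF assms] h1_nonzero_divisor h4_nonzero_divisor_mod_h1
    by blast
qed

end
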